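(* Let $\Bbbk$ be a commutative ring and let $V$ be an $\mathrm{FI}$-module. Then there is a short exact sequence of $\mathrm{FI}$-modules $$0\longrightarrow \widetilde{S}_{-1}V\longrightarrow QV\longrightarrow V\longrightarrow 0$$ which splits after applying the forgetful functor from $\mathrm{FI}$-modules to $\mathrm{FB}$-modules.
   Context: $\mathrm{FI}$ is the category whose objects are finite sets and whose morphisms are injective maps; $\mathrm{FB}$ is its subcategory with the same objects and bijections as morphisms. An $\mathrm{FI}$-module (resp. $\mathrm{FB}$-module) is a functor from $\mathrm{FI}$ (resp. $\mathrm{FB}$) to $\Bbbk$-modules; the forgetful functor restricts an $\mathrm{FI}$-module along $\mathrm{FB}\subset\mathrm{FI}$. Write $V_X=V(X)$ and $f_*=V(f)$. For a finite set $X$, $M(X)$ is the $\mathrm{FI}$-module with $M(X)_Y=\Bbbk\,\mathrm{FI}(X,Y)$ (free $\Bbbk$-module on injections $X\to Y$), with structure maps given by postcomposition; for $f\in\mathrm{FI}(X,Y)$ let $\rho_f:M(Y)\to M(X)$, $g\mapsto g\circ f$. Fix a one-element set $\{\star\}$; the shift functor is $SV=V\circ\sigma$ where $\sigma(X)=X\sqcup\{\star\}$, $\sigma(f)=f\sqcup\mathrm{id}_{\{\star\}}$. The coinduction of $V$ is the $\mathrm{FI}$-module $QV$ with $(QV)_X=\mathrm{Hom}_{\mathrm{FI}\text{-}\mathrm{Mod}}(S(M(X)),V)$ and $f_*(\phi)=\phi\circ S(\rho_f)$ for $f\in\mathrm{FI}(X,Y)$. The negative-one shift $\widetilde{S}_{-1}V$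 is defined by $(\widetilde{S}_{-1}V)_X=\bigoplus_{x\in X}V_{X\setminus\{x\}}$, and for an injection $f:X\to Y$, $f_*$ restricts on the summand $V_{X\setminus\{x\}}$ to $(f|_{X\setminus\{x\}})_*:V_{X\setminus\{x\}}\to V_{Y\setminus\{f(x)\}}$. *)

theory Defs
  imports "HOL-Algebra.Module" "HOL-Library.FuncSet"
begin

text \<open>Objects of FI are finite sets; we use finite subsets of nat (an equivalent
category). A morphism X \<rightarrow> Y is an injective map, represented as an extensional
function on X.\<close>

definition FI_hom :: "nat set \<Rightarrow> nat set \<Rightarrow> (nat \<Rightarrow> nat) set" where
  "FI_hom X Y = {f. f \<in> X \<rightarrow>\<^sub>E Y \<and> inj_on f X}"

definition FB_hom :: "nat set \<Rightarrow> nat set \<Rightarrow> (nat \<Rightarrow> nat) set" where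
  "FB_hom X Y = {f. f \<in> FI_hom X Y \<and> f ` X = Y}"

text \<open>Shift: sigma X = X disjoint-union {star}, modelled as insert 0 (Suc ` X) with star = 0.\<close>
definition sigma_obj :: "nat set \<Rightarrow> nat set" where
  "sigma_obj X = insert 0 (Suc ` X)"

definition sigma_mor :: "nat set \<Rightarrow> (nat \<Rightarrow> nat) \<Rightarrow> (nat \<Rightarrow> nat)" where
  "sigma_mor X f = restrict (\<lambda>m. if m = 0 then 0 else Suc (f (m - 1))) (sigma_obj X)"

definition lin_map :: "('k, 'r) ring_scheme \<Rightarrow> ('k, 'v, 'a) module_scheme
    \<Rightarrow> ('k, 'w, 'b) module_scheme \<Rightarrow> ('v \<Rightarrow> 'w) \<Rightarrow> bool" where
  "lin_map R M N h \<longleftrightarrow> h \<in> carrier M \<rightarrow> carrier N \<and>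
     (\<forall>x\<in>carrier M. \<forall>y\<in>carrier M. h (x \<oplus>\<^bsub>M\<^esub> y) = h x \<oplus>\<^bsub>N\<^esub> h y) \<and>
     (\<forall>c\<in>carrier R. \<forall>x\<in>carrier M. h (c \<odot>\<^bsub>M\<^esub> x) = c \<odot>\<^bsub>N\<^esub> h x)"

record ('k, 'v) FImod =
  obj :: "nat set \<Rightarrow> ('k, 'v) module"
  mor :: "nat set \<Rightarrow> nat set \<Rightarrow> (nat \<Rightarrow> nat) \<Rightarrow> 'v \<Rightarrow> 'v"

definition FI_module :: "('k, 'r) ring_scheme \<Rightarrow> ('k, 'v) FImod \<Rightarrow> bool" where
  "FI_module R V \<longleftrightarrow>
     (\<forall>X. finite X \<longrightarrow> module R (obj V X)) \<and>
     (\<forall>X Y f. finite X \<longrightarrow> finite Y \<longrightarrow> f \<in> FI_hom X Y \<longrightarrow>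
        lin_map R (obj V X) (obj V Y) (mor V X Y f)) \<and>
     (\<forall>X. finite X \<longrightarrow> (\<forall>v\<in>carrier (obj V X). mor V X X (restrict id X) v = v)) \<and>
     (\<forall>X Y Z f g. finite X \<longrightarrow> finite Y \<longrightarrow> finite Z \<longrightarrow> f \<in> FI_hom X Y \<longrightarrow> g \<in> FI_hom Y Z \<longrightarrow>
        (\<forall>v\<in>carrier (obj V X). mor V X Z (compose X g f) v = mor V Y Z g (mor V X Y f v)))"

definition FI_morphism :: "('k, 'r) ring_scheme \<Rightarrow> ('k, 'v) FImod \<Rightarrow> ('k, 'w) FImod
    \<Rightarrow> (nat set \<Rightarrow> 'v \<Rightarrow> 'w) \<Rightarrow> bool" where
  "FI_morphism R V W \<eta> \<longleftrightarrow>
     (\<forall>X. finite X \<longrightarrow> lin_map R (obj V X) (obj W X) (\<eta> X)) \<and>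
     (\<forall>X Y f. finite X \<longrightarrow> finite Y \<longrightarrow> f \<in> FI_hom X Y \<longrightarrow>
        (\<forall>v\<in>carrier (obj V X). \<eta> Y (mor V X Y f v) = mor W X Y f (\<eta> X v)))"

definition FB_morphism :: "('k, 'r) ring_scheme \<Rightarrow> ('k, 'v) FImod \<Rightarrow> ('k, 'w) FImod
    \<Rightarrow> (nat set \<Rightarrow> 'v \<Rightarrow> 'w) \<Rightarrow> bool" where
  "FB_morphism R V W \<eta> \<longleftrightarrow>
     (\<forall>X. finite X \<longrightarrow> lin_map R (obj V X) (obj W X) (\<eta> X)) \<and>
     (\<forall>X Y f. finite X \<longrightarrow> finite Y \<longrightarrow> f \<in> FB_hom X Y \<longrightarrow>
        (\<forall>v\<in>carrier (obj V X). \<eta> Y (mor V X Y f v) = mor W X Y f (\<eta> X v)))"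

definition short_exact :: "('k, 'r) ring_scheme \<Rightarrow> ('k, 'a) FImod \<Rightarrow> ('k, 'b) FImod \<Rightarrow> ('k, 'c) FImod
    \<Rightarrow> (nat set \<Rightarrow> 'a \<Rightarrow> 'b) \<Rightarrow> (nat set \<Rightarrow> 'b \<Rightarrow> 'c) \<Rightarrow> bool" where
  "short_exact R A B C i p \<longleftrightarrow>
     FI_morphism R A B i \<and> FI_morphism R B C p \<and>
     (\<forall>X. finite X \<longrightarrow>
        inj_on (i X) (carrier (obj A X)) \<and>
        p X ` carrier (obj B X) = carrier (obj C X) \<and>
        i X ` carrier (obj A X) = {b \<in> carrier (obj B X). p X b = \<zero>\<^bsub>obj C X\<^esub>})"

definition free_mod :: "('k, 'r) ring_scheme \<Rightarrow> 'b set \<Rightarrow> ('k, 'b \<Rightarrow> 'k) module" where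
  "free_mod R B = \<lparr> carrier = B \<rightarrow>\<^sub>E carrier R,
       mult = (\<lambda>a b. undefined), one = undefined,
       zero = restrict (\<lambda>_. \<zero>\<^bsub>R\<^esub>) B,
       add = (\<lambda>a b. restrict (\<lambda>x. a x \<oplus>\<^bsub>R\<^esub> b x) B),
       smult = (\<lambda>c a. restrict (\<lambda>x. c \<otimes>\<^bsub>R\<^esub> a x) B) \<rparr>"

definition lin_ext :: "('k, 'r) ring_scheme \<Rightarrow> 'b set \<Rightarrow> 'c set \<Rightarrow> ('b \<Rightarrow> 'c)
    \<Rightarrow> ('b \<Rightarrow> 'k) \<Rightarrow> ('c \<Rightarrow> 'k)" where
  "lin_ext R B B' g a = restrict (\<lambda>y. finsum R a {x \<in> B. g x = y}) B'"

definition Mrep :: "('k, 'r) ring_scheme \<Rightarrow> nat set \<Rightarrow> ('k, (nat \<Rightarrow> nat) \<Rightarrow> 'k) FImod" where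
  "Mrep R X = \<lparr> obj = (\<lambda>Y. free_mod R (FI_hom X Y)),
       mor = (\<lambda>Y Z h. lin_ext R (FI_hom X Y) (FI_hom X Z) (\<lambda>g. compose X h g)) \<rparr>"

definition rho :: "('k, 'r) ring_scheme \<Rightarrow> nat set \<Rightarrow> nat set \<Rightarrow> (nat \<Rightarrow> nat)
    \<Rightarrow> nat set \<Rightarrow> ((nat \<Rightarrow> nat) \<Rightarrow> 'k) \<Rightarrow> ((nat \<Rightarrow> nat) \<Rightarrow> 'k)" where
  "rho R X Y f Z = lin_ext R (FI_hom Y Z) (FI_hom X Z) (\<lambda>g. compose X g f)"

definition shift :: "('k, 'v) FImod \<Rightarrow> ('k, 'v) FImod" where
  "shift V = \<lparr> obj = (\<lambda>X. obj V (sigma_obj X)),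
       mor = (\<lambda>X Y f. mor V (sigma_obj X) (sigma_obj Y) (sigma_mor X f)) \<rparr>"

text \<open>(QV)_X = Hom_{FI-Mod}(S(M(X)), V): natural transformations, represented
extensionally (undefined on infinite sets and outside carriers).\<close>
definition Hom_carrier :: "('k, 'r) ring_scheme \<Rightarrow> ('k, 'a) FImod \<Rightarrow> ('k, 'v) FImod
    \<Rightarrow> (nat set \<Rightarrow> 'a \<Rightarrow> 'v) set" where
  "Hom_carrier R A V = {\<phi>. FI_morphism R A V \<phi> \<and>
      (\<forall>Y. \<not> finite Y \<longrightarrow> \<phi> Y = undefined) \<and>
      (\<forall>Y. finite Y \<longrightarrow> \<phi> Y \<in> extensional (carrier (obj A Y)))}"

definition Hom_mod :: "('k, 'r) ring_scheme \<Rightarrow> ('k, 'a) FImod \<Rightarrow> ('k, 'v) FImod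
    \<Rightarrow> ('k, nat set \<Rightarrow> 'a \<Rightarrow> 'v) module" where
  "Hom_mod R A V = \<lparr> carrier = Hom_carrier R A V,
     mult = (\<lambda>a b. undefined), one = undefined,
     zero = (\<lambda>Y. if finite Y then restrict (\<lambda>m. \<zero>\<^bsub>obj V Y\<^esub>) (carrier (obj A Y)) else undefined),
     add = (\<lambda>\<phi> \<psi> Y. if finite Y then
               restrict (\<lambda>m. \<phi> Y m \<oplus>\<^bsub>obj V Y\<^esub> \<psi> Y m) (carrier (obj A Y)) else undefined),
     smult = (\<lambda>c \<phi> Y. if finite Y then
               restrict (\<lambda>m. c \<odot>\<^bsub>obj V Y\<^esub> \<phi> Y m) (carrier (obj A Y)) else undefined) \<rparr>"

definition coind :: "('k, 'r) ring_scheme \<Rightarrow> ('k, 'v) FImod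
    \<Rightarrow> ('k, nat set \<Rightarrow> ((nat \<Rightarrow> nat) \<Rightarrow> 'k) \<Rightarrow> 'v) FImod" where
  "coind R V = \<lparr> obj = (\<lambda>X. Hom_mod R (shift (Mrep R X)) V),
     mor = (\<lambda>X Y f \<phi> W. if finite W then
              restrict (\<lambda>m. \<phi> W (rho R X Y f (sigma_obj W) m))
                       (carrier (obj (shift (Mrep R Y)) W))
            else undefined) \<rparr>"

definition negshift :: "('k, 'v) FImod \<Rightarrow> ('k, nat \<Rightarrow> 'v) FImod" where
  "negshift V = \<lparr> obj = (\<lambda>X. \<lparr> carrier = (\<Pi>\<^sub>E x\<in>X. carrier (obj V (X - {x}))),
        mult = (\<lambda>a b. undefined), one = undefined,
        zero = restrict (\<lambda>x. \<zero>\<^bsub>obj V (X - {x})\<^esub>) X,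
        add = (\<lambda>a b. restrict (\<lambda>x. a x \<oplus>\<^bsub>obj V (X - {x})\<^esub> b x) X),
        smult = (\<lambda>c a. restrict (\<lambda>x. c \<odot>\<^bsub>obj V (X - {x})\<^esub> a x) X) \<rparr>),
     mor = (\<lambda>X Y f a. restrict (\<lambda>y.
              if \<exists>x\<in>X. f x = y then
                (let x = (THE x. x \<in> X \<and> f x = y) in
                   mor V (X - {x}) (Y - {y}) (restrict f (X - {x})) (a x))
              else \<zero>\<^bsub>obj V (Y - {y})\<^esub>) Y) \<rparr>"

end

theory Submission
  imports Defs
begin

text \<open>An injection \<open>g : X \<rightarrow> W \<squnion> {\<star>}\<close> either misses \<open>\<star>\<close>, and then \<open>g = \<sigma>(h) \<circ> \<iota>\<close> for the
  inclusion \<open>\<iota> : X \<rightarrow> X \<squnion> {\<star>}\<close> and a unique \<open>h : X \<rightarrow> W\<close>, or sends exactly one \<open>x \<in> X\<close> to \<open>\<star>\<close>,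
  and then \<open>g = \<sigma>(h) \<circ> j\<^sub>x\<close> for the map \<open>j\<^sub>x : X \<rightarrow> (X - {x}) \<squnion> {\<star>}\<close> sending \<open>x\<close> to \<open>\<star>\<close> and a
  unique \<open>h : X - {x} \<rightarrow> W\<close>. Since \<open>S(M(X))\<close> is levelwise free on these injections, a natural
  map \<open>\<phi> : S(M(X)) \<rightarrow> V\<close> is freely determined by \<open>\<phi>(\<iota>) \<in> V\<^sub>X\<close> and the \<open>\<phi>(j\<^sub>x) \<in> V\<^bsub>X - {x}\<^esub>\<close>,
  i.e. \<open>(QV)\<^sub>X \<cong> V\<^sub>X \<oplus> (S\<^sub>-\<^sub>1 V)\<^sub>X\<close>. The first projection \<open>\<phi> \<mapsto> \<phi>(\<iota>)\<close> is natural because \<open>\<iota>\<close>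
  is, and its kernel is the image of \<open>S\<^sub>-\<^sub>1 V\<close>. The section \<open>v \<mapsto> (v, 0)\<close> is natural only for
  bijections: pulling back along a non-surjective \<open>f\<close> turns some \<open>j\<^sub>y\<close> into injections
  missing \<open>\<star>\<close>.\<close>

section \<open>Injections into a shifted set\<close>

lemma FI_homD:
  assumes "f \<in> FI_hom X Y"
  shows "f \<in> X \<rightarrow>\<^sub>E Y" "inj_on f X"
  using assms by (auto simp: FI_hom_def)

lemma FI_hom_compose: "f \<in> FI_hom X Y \<Longrightarrow> g \<in> FI_hom Y Z \<Longrightarrow> compose X g f \<in> FI_hom X Z"
  unfolding FI_hom_def compose_def by (auto simp: inj_on_def PiE_def Pi_def extensional_def)

lemma finite_FI_hom: "finite X \<Longrightarrow> finite Y \<Longrightarrow> finite (FI_hom X Y)"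
  unfolding FI_hom_def by (rule finite_subset[OF _ finite_PiE[of X "\<lambda>_. Y"]]) auto

lemma finite_sigma_obj: "finite X \<Longrightarrow> finite (sigma_obj X)"
  by (simp add: sigma_obj_def)

lemma sigma_mor_FI_hom: "f \<in> FI_hom X Y \<Longrightarrow> sigma_mor X f \<in> FI_hom (sigma_obj X) (sigma_obj Y)"
  unfolding FI_hom_def sigma_mor_def sigma_obj_def
  by (auto simp: inj_on_def PiE_def Pi_def extensional_def split: if_splits)

lemma sigma_mor_0 [simp]: "sigma_mor X f 0 = 0"
  by (simp add: sigma_mor_def sigma_obj_def)

lemma sigma_mor_Suc [simp]: "z \<in> X \<Longrightarrow> sigma_mor X f (Suc z) = Suc (f z)"
  by (simp add: sigma_mor_def sigma_obj_def)

lemma compose_sigma_mor_nonzero: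
  assumes "g \<in> FI_hom X (sigma_obj W)" "z \<in> X" "g z \<noteq> 0"
  shows "compose X (sigma_mor W h) g z = Suc (h (g z - 1))"
proof -
  have "g z \<in> sigma_obj W" using FI_homD(1)[OF assms(1)] assms(2) by auto
  then obtain w where "g z = Suc w" "w \<in> W" using assms(3) by (auto simp: sigma_obj_def)
  then show ?thesis using assms(2) by (simp add: compose_def)
qed

text \<open>With \<open>\<star> = 0\<close>, \<open>shift_incl X\<close> and \<open>shift_at X x\<close> are the injections \<open>\<iota>\<close> and \<open>j\<^sub>x\<close>;
  \<open>unshift\<close> undoes the \<open>Suc\<close> of \<open>sigma_obj\<close>.\<close>

definition shift_incl :: "nat set \<Rightarrow> nat \<Rightarrow> nat" where
  "shift_incl X = restrict Suc X"

definition shift_at :: "nat set \<Rightarrow> nat \<Rightarrow> nat \<Rightarrow> nat" where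
  "shift_at X x = restrict (\<lambda>z. if z = x then 0 else Suc z) X"

definition unshift :: "(nat \<Rightarrow> nat) \<Rightarrow> nat set \<Rightarrow> nat \<Rightarrow> nat" where
  "unshift g S = restrict (\<lambda>z. g z - 1) S"

lemma shift_incl_FI_hom: "shift_incl X \<in> FI_hom X (sigma_obj X)"
  unfolding FI_hom_def shift_incl_def sigma_obj_def by (auto simp: inj_on_def)

lemma shift_at_FI_hom: "x \<in> X \<Longrightarrow> shift_at X x \<in> FI_hom X (sigma_obj (X - {x}))"
  unfolding FI_hom_def shift_at_def sigma_obj_def by (auto simp: inj_on_def)

lemma unshift_shift_incl: "unshift (shift_incl X) X = restrict id X"
  by (auto simp: unshift_def shift_incl_def fun_eq_iff)

lemma unshift_shift_at: "unshift (shift_at X x) (X - {x}) = restrict id (X - {x})"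
  by (auto simp: unshift_def shift_at_def fun_eq_iff)

lemma unshift_FI_hom:
  assumes g: "g \<in> FI_hom X (sigma_obj W)" and "S \<subseteq> X" and nz: "\<forall>z\<in>S. g z \<noteq> 0"
  shows "unshift g S \<in> FI_hom S W"
proof -
  have "g z - 1 \<in> W" if "z \<in> S" for z
    using that assms FI_homD(1)[OF g] by (force simp: sigma_obj_def)
  moreover have "inj_on (\<lambda>z. g z - 1) S"
  proof (rule inj_onI)
    fix u v assume "u \<in> S" "v \<in> S" "g u - 1 = g v - 1"
    then have "g u = g v" using nz by (metis Suc_pred' not_gr0)
    then show "u = v" using FI_homD(2)[OF g] \<open>S \<subseteq> X\<close> \<open>u \<in> S\<close> \<open>v \<in> S\<close> by (auto simp: inj_on_def)
  qed
  ultimately show ?thesis unfolding FI_hom_def unshift_def by auto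
qed

lemma unshift_FI_hom_avoiding:
  "g \<in> FI_hom X (sigma_obj W) \<Longrightarrow> 0 \<notin> g ` X \<Longrightarrow> unshift g X \<in> FI_hom X W"
  by (rule unshift_FI_hom) auto

lemma unshift_FI_hom_hitting:
  assumes "g \<in> FI_hom X (sigma_obj W)" "x \<in> X" "g x = 0"
  shows "unshift g (X - {x}) \<in> FI_hom (X - {x}) W"
  using assms by (intro unshift_FI_hom) (auto dest!: FI_homD(2) simp: inj_on_def)

lemma shift_incl_factor:
  assumes g: "g \<in> FI_hom X (sigma_obj W)" and "0 \<notin> g ` X"
  shows "compose X (sigma_mor X (unshift g X)) (shift_incl X) = g"
proof (rule ext)
  fix z show "compose X (sigma_mor X (unshift g X)) (shift_incl X) z = g z"
  proof (cases "z \<in> X")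
    case True
    then have "g z \<noteq> 0" using assms(2) by force
    then show ?thesis using True by (simp add: compose_def shift_incl_def unshift_def)
  qed (use FI_homD(1)[OF g] in \<open>auto simp: compose_def PiE_def extensional_def\<close>)
qed

lemma shift_at_factor:
  assumes g: "g \<in> FI_hom X (sigma_obj W)" and x: "x \<in> X" "g x = 0"
  shows "compose X (sigma_mor (X - {x}) (unshift g (X - {x}))) (shift_at X x) = g"
proof (rule ext)
  fix z show "compose X (sigma_mor (X - {x}) (unshift g (X - {x}))) (shift_at X x) z = g z"
  proof (cases "z \<in> X - {x}")
    case True
    then have "g z \<noteq> 0" using x inj_onD[OF FI_homD(2)[OF g]] by fastforce
    then show ?thesis using True by (simp add: compose_def shift_at_def unshift_def)
  qed (use x FI_homD(1)[OF g] in \<open>auto simp: compose_def shift_at_def PiE_def extensional_def\<close>)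
qed

lemma unshift_compose_sigma_mor:
  assumes g: "g \<in> FI_hom X (sigma_obj W)" and "S \<subseteq> X" and "\<forall>z\<in>S. g z \<noteq> 0"
  shows "unshift (compose X (sigma_mor W h) g) S = compose S h (unshift g S)"
  using assms compose_sigma_mor_nonzero[OF g]
  by (auto simp: unshift_def compose_def fun_eq_iff)

lemma unshift_compose:
  assumes "S \<subseteq> X" and "f ` S \<subseteq> T"
  shows "unshift (compose X k f) S = compose S (unshift k T) f"
  using assms by (auto simp: unshift_def compose_def fun_eq_iff)

lemma restrict_FI_hom_remove:
  "f \<in> FI_hom X Y \<Longrightarrow> x \<in> X \<Longrightarrow> restrict f (X - {x}) \<in> FI_hom (X - {x}) (Y - {f x})"
  by (auto simp: FI_hom_def inj_on_def)

lemma unshift_compose_remove: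
  assumes f: "f \<in> FI_hom X Y" and x: "x \<in> X"
  shows "unshift (compose X k f) (X - {x})
       = compose (X - {x}) (unshift k (Y - {f x})) (restrict f (X - {x}))"
  using assms FI_homD[OF f] by (subst unshift_compose[where T = "Y - {f x}"])
    (auto simp: inj_on_def compose_def fun_eq_iff)

lemma zero_in_compose_image_iff:
  assumes k: "k \<in> FI_hom Y (sigma_obj W)" and f: "f \<in> FI_hom X Y" and y: "y \<in> Y" "k y = 0"
  shows "0 \<in> compose X k f ` X \<longleftrightarrow> y \<in> f ` X"
proof -
  have "compose X k f ` X = k ` f ` X" by (force simp: compose_def)
  moreover have "f ` X \<subseteq> Y" using FI_homD(1)[OF f] by auto
  ultimately show ?thesis using y inj_on_image_mem_iff[OF FI_homD(2)[OF k]] by metis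
qed

lemma compose_sigma_mor_Pi:
  "h \<in> FI_hom W W' \<Longrightarrow> compose X (sigma_mor W h) \<in> FI_hom X (sigma_obj W) \<rightarrow> FI_hom X (sigma_obj W')"
  using FI_hom_compose sigma_mor_FI_hom by blast

lemma shift_incl_natural:
  "f \<in> FI_hom X Y \<Longrightarrow> compose X (shift_incl Y) f = compose X (sigma_mor X f) (shift_incl X)"
  by (auto simp: fun_eq_iff compose_def shift_incl_def FI_hom_def)

section \<open>Free modules and linear maps\<close>

lemma free_mod_simps:
  "carrier (free_mod R B) = B \<rightarrow>\<^sub>E carrier R"
  "zero (free_mod R B) = restrict (\<lambda>_. \<zero>\<^bsub>R\<^esub>) B"
  "add (free_mod R B) a b = restrict (\<lambda>x. a x \<oplus>\<^bsub>R\<^esub> b x) B"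
  "smult (free_mod R B) c a = restrict (\<lambda>x. c \<otimes>\<^bsub>R\<^esub> a x) B"
  by (simp_all add: free_mod_def)

definition basis_vec :: "('k, 'r) ring_scheme \<Rightarrow> 'b set \<Rightarrow> 'b \<Rightarrow> 'b \<Rightarrow> 'k" where
  "basis_vec R B c = restrict (\<lambda>x. if x = c then \<one>\<^bsub>R\<^esub> else \<zero>\<^bsub>R\<^esub>) B"

lemma (in ring) basis_vec_in_free: "basis_vec R B c \<in> B \<rightarrow>\<^sub>E carrier R"
  by (auto simp: basis_vec_def)

lemma (in ring) lin_ext_basis_vec:
  assumes "finite B" "c \<in> B" "k \<in> B \<rightarrow> B'"
  shows "lin_ext R B B' k (basis_vec R B c) = basis_vec R B' (k c)"
proof (rule ext)
  fix y
  show "lin_ext R B B' k (basis_vec R B c) y = basis_vec R B' (k c) y"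
  proof (cases "y \<in> B' \<and> k c = y")
    case True
    then have "finsum R (basis_vec R B c) {x \<in> B. k x = y} = finsum R (\<lambda>_. \<one>) {c}"
      using assms by (intro add.finprod_mono_neutral_cong_right) (auto simp: basis_vec_def)
    then show ?thesis using True by (simp add: lin_ext_def basis_vec_def)
  next
    case False
    have "finsum R (basis_vec R B c) {x \<in> B. k x = y} = finsum R (\<lambda>_. \<zero>) {x \<in> B. k x = y}"
      using False assms by (intro finsum_cong') (auto simp: basis_vec_def)
    then show ?thesis using False assms by (auto simp: lin_ext_def basis_vec_def)
  qed
qed

lemma (in module) finsum_basis_vec_smult:
  assumes "finite B" "c \<in> B" "f \<in> B \<rightarrow> carrier M"
  shows "(\<Oplus>\<^bsub>M\<^esub> g\<in>B. basis_vec R B c g \<odot>\<^bsub>M\<^esub> f g) = f c"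
proof -
  have "(\<Oplus>\<^bsub>M\<^esub> g\<in>B. basis_vec R B c g \<odot>\<^bsub>M\<^esub> f g) = (\<Oplus>\<^bsub>M\<^esub> g\<in>B. if c = g then f g else \<zero>\<^bsub>M\<^esub>)"
    by (rule M.finsum_cong') (use assms in \<open>auto simp: basis_vec_def Pi_def\<close>)
  also have "\<dots> = f c" by (rule M.finsum_singleton) (use assms in auto)
  finally show ?thesis .
qed

lemma (in module) finsum_smult_rdistr:
  assumes "finite A" "f \<in> A \<rightarrow> carrier R" "x \<in> carrier M"
  shows "(\<Oplus>\<^bsub>R\<^esub> i\<in>A. f i) \<odot>\<^bsub>M\<^esub> x = (\<Oplus>\<^bsub>M\<^esub> i\<in>A. f i \<odot>\<^bsub>M\<^esub> x)"
  using assms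
proof (induct set: finite)
  case (insert a F) then show ?case
    by (simp add: Pi_def smult_l_distr R.finsum_insert M.finsum_insert R.finsum_closed)
qed simp

lemma (in module) finsum_lin_ext_smult:
  assumes fin: "finite B" "finite B'" and k: "k \<in> B \<rightarrow> B'" and m: "m \<in> B \<rightarrow> carrier R"
    and v: "v \<in> B' \<rightarrow> carrier M"
  shows "(\<Oplus>\<^bsub>M\<^esub> y\<in>B'. lin_ext R B B' k m y \<odot>\<^bsub>M\<^esub> v y) = (\<Oplus>\<^bsub>M\<^esub> x\<in>B. m x \<odot>\<^bsub>M\<^esub> v (k x))"
proof -
  have "(\<Oplus>\<^bsub>M\<^esub> y\<in>B'. lin_ext R B B' k m y \<odot>\<^bsub>M\<^esub> v y) =
        (\<Oplus>\<^bsub>M\<^esub> y\<in>B'. (\<Oplus>\<^bsub>M\<^esub> x\<in>{x\<in>B. k x = y}. m x \<odot>\<^bsub>M\<^esub> v (k x)))"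
  proof (rule M.finsum_cong')
    fix y assume y: "y \<in> B'"
    have "lin_ext R B B' k m y \<odot>\<^bsub>M\<^esub> v y = (\<Oplus>\<^bsub>M\<^esub> x\<in>{x\<in>B. k x = y}. m x \<odot>\<^bsub>M\<^esub> v y)"
      using y fin m v by (auto simp: lin_ext_def intro!: finsum_smult_rdistr)
    also have "\<dots> = (\<Oplus>\<^bsub>M\<^esub> x\<in>{x\<in>B. k x = y}. m x \<odot>\<^bsub>M\<^esub> v (k x))"
      by (rule M.finsum_cong') (use y m v in auto)
    finally show "lin_ext R B B' k m y \<odot>\<^bsub>M\<^esub> v y = (\<Oplus>\<^bsub>M\<^esub> x\<in>{x\<in>B. k x = y}. m x \<odot>\<^bsub>M\<^esub> v (k x))" .
  qed (use m v k fin in \<open>auto intro!: M.finsum_closed\<close>)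
  also have "\<dots> = (\<Oplus>\<^bsub>M\<^esub> x\<in>(\<Union>y\<in>B'. {x\<in>B. k x = y}). m x \<odot>\<^bsub>M\<^esub> v (k x))"
    by (rule M.add.finprod_UN_disjoint[symmetric]) (use fin m v k in \<open>auto simp: pairwise_def disjnt_def\<close>)
  also have "(\<Union>y\<in>B'. {x\<in>B. k x = y}) = B" using k by auto
  finally show ?thesis .
qed

lemma lin_map_closed: "lin_map R M N h \<Longrightarrow> x \<in> carrier M \<Longrightarrow> h x \<in> carrier N"
  by (auto simp: lin_map_def)

lemma lin_map_add:
  "lin_map R M N h \<Longrightarrow> x \<in> carrier M \<Longrightarrow> y \<in> carrier M \<Longrightarrow> h (x \<oplus>\<^bsub>M\<^esub> y) = h x \<oplus>\<^bsub>N\<^esub> h y"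
  by (simp add: lin_map_def)

lemma lin_map_smult:
  "lin_map R M N h \<Longrightarrow> c \<in> carrier R \<Longrightarrow> x \<in> carrier M \<Longrightarrow> h (c \<odot>\<^bsub>M\<^esub> x) = c \<odot>\<^bsub>N\<^esub> h x"
  by (simp add: lin_map_def)

lemma lin_map_zero:
  assumes "module R M" "module R N" "lin_map R M N h"
  shows "h \<zero>\<^bsub>M\<^esub> = \<zero>\<^bsub>N\<^esub>"
proof -
  interpret M: module R M by fact
  interpret N: module R N by fact
  have "h (\<zero>\<^bsub>R\<^esub> \<odot>\<^bsub>M\<^esub> \<zero>\<^bsub>M\<^esub>) = \<zero>\<^bsub>R\<^esub> \<odot>\<^bsub>N\<^esub> h \<zero>\<^bsub>M\<^esub>"
    by (rule lin_map_smult[OF assms(3)]) simp_all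
  then show ?thesis using lin_map_closed[OF assms(3) M.zero_closed] by simp
qed

lemma lin_map_finsum:
  assumes "module R M" "module R N" "lin_map R M N h" "finite S" "f \<in> S \<rightarrow> carrier M"
  shows "h (finsum M f S) = finsum N (\<lambda>i. h (f i)) S"
proof -
  interpret M: module R M by fact
  interpret N: module R N by fact
  show ?thesis
    using assms(4,5)
  proof (induct set: finite)
    case empty then show ?case using lin_map_zero[OF assms(1-3)] by simp
  next
    case (insert a F)
    then show ?case using lin_map_closed[OF assms(3)]
      by (simp add: M.finsum_insert N.finsum_insert M.finsum_closed lin_map_add[OF assms(3)] Pi_def)
  qed
qed

lemma (in ring) rho_basis_vec:
  assumes "finite Y" "finite Z" "f \<in> FI_hom X Y" "g \<in> FI_hom Y Z"
  shows "rho R X Y f Z (basis_vec R (FI_hom Y Z) g) = basis_vec R (FI_hom X Z) (compose X g f)"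
  unfolding rho_def using assms FI_hom_compose[OF assms(3)]
  by (intro lin_ext_basis_vec) (auto simp: finite_FI_hom)

lemma (in cring) lin_map_free_mod_eq_finsum:
  assumes fB: "finite B" and N: "module R N" and h: "lin_map R (free_mod R B) N h"
    and m: "m \<in> B \<rightarrow>\<^sub>E carrier R"
  shows "h m = (\<Oplus>\<^bsub>N\<^esub> g\<in>B. m g \<odot>\<^bsub>N\<^esub> h (basis_vec R B g))"
proof -
  interpret N: module R N by fact
  note h_closed = lin_map_closed[OF h, unfolded free_mod_simps]
  note h_add = lin_map_add[OF h, unfolded free_mod_simps]
  note h_smult = lin_map_smult[OF h, unfolded free_mod_simps]
  define part where "part S = restrict (\<lambda>x. if x \<in> S then m x else \<zero>) B" for S
  have part_closed: "part S \<in> B \<rightarrow>\<^sub>E carrier R" for S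
    using m by (auto simp: part_def)
  have "h (part S) = (\<Oplus>\<^bsub>N\<^esub> g\<in>S. m g \<odot>\<^bsub>N\<^esub> h (basis_vec R B g))" if "finite S" "S \<subseteq> B" for S
    using that
  proof (induct S rule: finite_induct)
    case empty
    have "restrict (\<lambda>g. \<zero> \<otimes> part {} g) B = part {}"
      by (auto simp: part_def fun_eq_iff)
    then have "h (part {}) = \<zero> \<odot>\<^bsub>N\<^esub> h (part {})"
      using h_smult[OF zero_closed part_closed[of "{}"]] by simp
    then show ?case using h_closed[OF part_closed] by simp
  next
    case (insert a S)
    have a: "a \<in> B" and ma: "m a \<in> carrier R" using insert m by auto
    define q where "q = restrict (\<lambda>g. m a \<otimes> basis_vec R B a g) B"
    have q_closed: "q \<in> B \<rightarrow>\<^sub>E carrier R"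
      using ma basis_vec_in_free[of B a] by (auto simp: q_def PiE_iff)
    have "part (insert a S) = restrict (\<lambda>g. part S g \<oplus> q g) B"
      using m insert(2) ma by (auto simp: part_def q_def basis_vec_def fun_eq_iff PiE_iff)
    then have "h (part (insert a S)) =
        (\<Oplus>\<^bsub>N\<^esub> g\<in>S. m g \<odot>\<^bsub>N\<^esub> h (basis_vec R B g)) \<oplus>\<^bsub>N\<^esub> m a \<odot>\<^bsub>N\<^esub> h (basis_vec R B a)"
      using h_add[OF part_closed q_closed] h_smult[OF ma basis_vec_in_free] insert
      by (simp add: q_def)
    also have "\<dots> = m a \<odot>\<^bsub>N\<^esub> h (basis_vec R B a) \<oplus>\<^bsub>N\<^esub> (\<Oplus>\<^bsub>N\<^esub> g\<in>S. m g \<odot>\<^bsub>N\<^esub> h (basis_vec R B g))"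
      using insert m h_closed[OF basis_vec_in_free]
      by (auto intro!: N.a_comm N.finsum_closed simp: PiE_iff Pi_def)
    also have "\<dots> = (\<Oplus>\<^bsub>N\<^esub> g\<in>insert a S. m g \<odot>\<^bsub>N\<^esub> h (basis_vec R B g))"
      using insert m h_closed[OF basis_vec_in_free]
      by (intro N.finsum_insert[symmetric]) (auto simp: PiE_iff Pi_def)
    finally show ?case .
  qed
  moreover have "part B = m" using m by (auto simp: part_def fun_eq_iff PiE_iff extensional_def)
  ultimately show ?thesis using fB by blast
qed

lemma obj_shift_Mrep: "obj (shift (Mrep R X)) W = free_mod R (FI_hom X (sigma_obj W))"
  by (simp add: shift_def Mrep_def)

lemma mor_shift_Mrep:
  "mor (shift (Mrep R X)) W W' h =
     lin_ext R (FI_hom X (sigma_obj W)) (FI_hom X (sigma_obj W')) (compose X (sigma_mor W h))"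
  by (simp add: shift_def Mrep_def)

lemma Hom_mod_simps:
  "carrier (Hom_mod R A V) = Hom_carrier R A V"
  "add (Hom_mod R A V) \<phi> \<psi> = (\<lambda>Y. if finite Y then
     restrict (\<lambda>m. \<phi> Y m \<oplus>\<^bsub>obj V Y\<^esub> \<psi> Y m) (carrier (obj A Y)) else undefined)"
  "smult (Hom_mod R A V) c \<phi> = (\<lambda>Y. if finite Y then
     restrict (\<lambda>m. c \<odot>\<^bsub>obj V Y\<^esub> \<phi> Y m) (carrier (obj A Y)) else undefined)"
  by (simp_all add: Hom_mod_def)

lemma coind_obj: "obj (coind R V) X = Hom_mod R (shift (Mrep R X)) V"
  by (simp add: coind_def)

lemma negshift_simps:
  "carrier (obj (negshift V) X) = (\<Pi>\<^sub>E x\<in>X. carrier (obj V (X - {x})))"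
  "add (obj (negshift V) X) a b = restrict (\<lambda>x. a x \<oplus>\<^bsub>obj V (X - {x})\<^esub> b x) X"
  "smult (obj (negshift V) X) c a = restrict (\<lambda>x. c \<odot>\<^bsub>obj V (X - {x})\<^esub> a x) X"
  "zero (obj (negshift V) X) = restrict (\<lambda>x. \<zero>\<^bsub>obj V (X - {x})\<^esub>) X"
  by (simp_all add: negshift_def)

lemma negshift_mor_image:
  assumes f: "f \<in> FI_hom X Y" and x: "x \<in> X"
  shows "mor (negshift V) X Y f a (f x) = mor V (X - {x}) (Y - {f x}) (restrict f (X - {x})) (a x)"
proof -
  have "(THE x'. x' \<in> X \<and> f x' = f x) = x"
    using x FI_homD(2)[OF f] by (auto simp: inj_on_def)
  then show ?thesis using x FI_homD(1)[OF f] by (auto simp: negshift_def Let_def)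
qed

lemma negshift_mor_outside_image:
  "y \<in> Y \<Longrightarrow> y \<notin> f ` X \<Longrightarrow> mor (negshift V) X Y f a y = \<zero>\<^bsub>obj V (Y - {y})\<^esub>"
  by (auto simp: negshift_def)

section \<open>Natural maps out of a shifted representable\<close>

definition basis_extension :: "('k, 'r) ring_scheme \<Rightarrow> ('k, 'v) FImod \<Rightarrow> nat set
    \<Rightarrow> (nat set \<Rightarrow> (nat \<Rightarrow> nat) \<Rightarrow> 'v) \<Rightarrow> nat set \<Rightarrow> ((nat \<Rightarrow> nat) \<Rightarrow> 'k) \<Rightarrow> 'v" where
  "basis_extension R V X val = (\<lambda>W. if finite W then
     restrict (\<lambda>m. \<Oplus>\<^bsub>obj V W\<^esub> g\<in>FI_hom X (sigma_obj W). m g \<odot>\<^bsub>obj V W\<^esub> val W g)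
       (FI_hom X (sigma_obj W) \<rightarrow>\<^sub>E carrier R)
     else undefined)"

lemma basis_extension_apply:
  "finite W \<Longrightarrow> m \<in> FI_hom X (sigma_obj W) \<rightarrow>\<^sub>E carrier R \<Longrightarrow>
   basis_extension R V X val W m =
     (\<Oplus>\<^bsub>obj V W\<^esub> g\<in>FI_hom X (sigma_obj W). m g \<odot>\<^bsub>obj V W\<^esub> val W g)"
  by (simp add: basis_extension_def)

locale cring_FI_module = cring R for R :: "('k, 'r) ring_scheme" +
  fixes V :: "('k, 'v) FImod"
  assumes FI_module: "FI_module R V"
begin

lemma module_obj: "finite X \<Longrightarrow> module R (obj V X)"
  using FI_module by (simp add: FI_module_def)

lemma lin_map_mor:
  "finite X \<Longrightarrow> finite Y \<Longrightarrow> f \<in> FI_hom X Y \<Longrightarrow> lin_map R (obj V X) (obj V Y) (mor V X Y f)"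
  using FI_module by (simp add: FI_module_def)

lemma mor_closed:
  "finite X \<Longrightarrow> finite Y \<Longrightarrow> f \<in> FI_hom X Y \<Longrightarrow> v \<in> carrier (obj V X) \<Longrightarrow>
   mor V X Y f v \<in> carrier (obj V Y)"
  using lin_map_closed[OF lin_map_mor] .

lemma mor_zero: "finite X \<Longrightarrow> finite Y \<Longrightarrow> f \<in> FI_hom X Y \<Longrightarrow> mor V X Y f \<zero>\<^bsub>obj V X\<^esub> = \<zero>\<^bsub>obj V Y\<^esub>"
  using lin_map_zero[OF module_obj module_obj lin_map_mor] .

lemma mor_id: "finite X \<Longrightarrow> v \<in> carrier (obj V X) \<Longrightarrow> mor V X X (restrict id X) v = v"
  using FI_module by (simp add: FI_module_def)

lemma mor_compose:
  "finite X \<Longrightarrow> finite Y \<Longrightarrow> finite Z \<Longrightarrow> f \<in> FI_hom X Y \<Longrightarrow> g \<in> FI_hom Y Z \<Longrightarrow>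
   v \<in> carrier (obj V X) \<Longrightarrow> mor V X Z (compose X g f) v = mor V Y Z g (mor V X Y f v)"
  using FI_module by (simp add: FI_module_def)

lemma obj_add_closed:
  assumes "finite X" "v \<in> carrier (obj V X)" "w \<in> carrier (obj V X)"
  shows "v \<oplus>\<^bsub>obj V X\<^esub> w \<in> carrier (obj V X)"
proof -
  interpret M: module R "obj V X" using module_obj[OF assms(1)] .
  show ?thesis using assms by simp
qed

lemma obj_smult_closed:
  "finite X \<Longrightarrow> c \<in> carrier R \<Longrightarrow> v \<in> carrier (obj V X) \<Longrightarrow> c \<odot>\<^bsub>obj V X\<^esub> v \<in> carrier (obj V X)"
  using module.smult_closed[OF module_obj] by blast

lemma obj_zero_closed:
  assumes "finite X" shows "\<zero>\<^bsub>obj V X\<^esub> \<in> carrier (obj V X)"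
proof -
  interpret M: module R "obj V X" using module_obj[OF assms] .
  show ?thesis by simp
qed

lemma negshift_add_closed:
  "finite X \<Longrightarrow> a \<in> carrier (obj (negshift V) X) \<Longrightarrow> b \<in> carrier (obj (negshift V) X) \<Longrightarrow>
   add (obj (negshift V) X) a b \<in> carrier (obj (negshift V) X)"
  by (auto simp: negshift_simps intro!: obj_add_closed)

lemma negshift_smult_closed:
  "finite X \<Longrightarrow> c \<in> carrier R \<Longrightarrow> a \<in> carrier (obj (negshift V) X) \<Longrightarrow>
   smult (obj (negshift V) X) c a \<in> carrier (obj (negshift V) X)"
  by (auto simp: negshift_simps intro!: obj_smult_closed)

lemma negshift_zero_closed: "finite X \<Longrightarrow> \<zero>\<^bsub>obj (negshift V) X\<^esub> \<in> carrier (obj (negshift V) X)"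
  by (auto simp: negshift_simps intro!: obj_zero_closed)

lemma obj_zero_add_zero: "finite X \<Longrightarrow> \<zero>\<^bsub>obj V X\<^esub> \<oplus>\<^bsub>obj V X\<^esub> \<zero>\<^bsub>obj V X\<^esub> = \<zero>\<^bsub>obj V X\<^esub>"
  using abelian_monoid.l_zero[OF abelian_group.axioms(1)[OF module.axioms(2)[OF module_obj]]
      obj_zero_closed] .

lemma obj_smult_zero: "finite X \<Longrightarrow> c \<in> carrier R \<Longrightarrow> c \<odot>\<^bsub>obj V X\<^esub> \<zero>\<^bsub>obj V X\<^esub> = \<zero>\<^bsub>obj V X\<^esub>"
  using module.smult_r_null[OF module_obj] .

lemma negshift_zero_add_zero:
  "finite X \<Longrightarrow> add (obj (negshift V) X) \<zero>\<^bsub>obj (negshift V) X\<^esub> \<zero>\<^bsub>obj (negshift V) X\<^esub>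
     = \<zero>\<^bsub>obj (negshift V) X\<^esub>"
  by (auto simp: negshift_simps obj_zero_add_zero intro!: restrict_ext)

lemma negshift_smult_zero:
  "finite X \<Longrightarrow> c \<in> carrier R \<Longrightarrow> smult (obj (negshift V) X) c \<zero>\<^bsub>obj (negshift V) X\<^esub>
     = \<zero>\<^bsub>obj (negshift V) X\<^esub>"
  by (auto simp: negshift_simps obj_smult_zero intro!: restrict_ext)

lemma Hom_carrierD:
  assumes "\<phi> \<in> Hom_carrier R (shift (Mrep R X)) V"
  shows "\<And>W. finite W \<Longrightarrow> lin_map R (free_mod R (FI_hom X (sigma_obj W))) (obj V W) (\<phi> W)"
    and "\<And>W W' h m. finite W \<Longrightarrow> finite W' \<Longrightarrow> h \<in> FI_hom W W' \<Longrightarrow>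
           m \<in> FI_hom X (sigma_obj W) \<rightarrow>\<^sub>E carrier R \<Longrightarrow>
           \<phi> W' (lin_ext R (FI_hom X (sigma_obj W)) (FI_hom X (sigma_obj W'))
                   (compose X (sigma_mor W h)) m) = mor V W W' h (\<phi> W m)"
    and "\<And>W. \<not> finite W \<Longrightarrow> \<phi> W = undefined"
    and "\<And>W. finite W \<Longrightarrow> \<phi> W \<in> extensional (FI_hom X (sigma_obj W) \<rightarrow>\<^sub>E carrier R)"
  using assms unfolding Hom_carrier_def FI_morphism_def obj_shift_Mrep mor_shift_Mrep free_mod_simps
  by auto

lemma Hom_carrier_closed:
  "\<phi> \<in> Hom_carrier R (shift (Mrep R X)) V \<Longrightarrow> finite W \<Longrightarrow> m \<in> FI_hom X (sigma_obj W) \<rightarrow>\<^sub>E carrier R \<Longrightarrow>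
   \<phi> W m \<in> carrier (obj V W)"
  using lin_map_closed[OF Hom_carrierD(1)] by (simp add: free_mod_simps)

lemma basis_extension_lin:
  assumes fX: "finite X" and fW: "finite W"
    and val_closed: "\<And>g. g \<in> FI_hom X (sigma_obj W) \<Longrightarrow> val W g \<in> carrier (obj V W)"
  shows "lin_map R (obj (shift (Mrep R X)) W) (obj V W) (basis_extension R V X val W)"
proof -
  interpret M: module R "obj V W" using module_obj[OF fW] .
  let ?B = "FI_hom X (sigma_obj W)"
  have fB: "finite ?B" by (simp add: finite_FI_hom fX finite_sigma_obj fW)
  note expand = basis_extension_apply[OF fW]
  show ?thesis unfolding lin_map_def obj_shift_Mrep free_mod_simps
  proof (intro conjI ballI)
    show "basis_extension R V X val W \<in> (?B \<rightarrow>\<^sub>E carrier R) \<rightarrow> carrier (obj V W)"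
      using val_closed by (auto simp: expand PiE_iff intro!: M.finsum_closed)
  next
    fix x y assume x: "x \<in> ?B \<rightarrow>\<^sub>E carrier R" and y: "y \<in> ?B \<rightarrow>\<^sub>E carrier R"
    have xy: "restrict (\<lambda>g. x g \<oplus>\<^bsub>R\<^esub> y g) ?B \<in> ?B \<rightarrow>\<^sub>E carrier R" using x y by auto
    have "basis_extension R V X val W (restrict (\<lambda>g. x g \<oplus>\<^bsub>R\<^esub> y g) ?B)
        = (\<Oplus>\<^bsub>obj V W\<^esub> g\<in>?B. x g \<odot>\<^bsub>obj V W\<^esub> val W g \<oplus>\<^bsub>obj V W\<^esub> y g \<odot>\<^bsub>obj V W\<^esub> val W g)"
      unfolding expand[OF xy]
      by (rule M.finsum_cong') (use x y val_closed in \<open>auto simp: M.smult_l_distr PiE_iff\<close>)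
    also have "\<dots> = basis_extension R V X val W x \<oplus>\<^bsub>obj V W\<^esub> basis_extension R V X val W y"
      unfolding expand[OF x] expand[OF y]
      by (rule M.finsum_addf) (use x y val_closed in \<open>auto simp: PiE_iff\<close>)
    finally show "basis_extension R V X val W (restrict (\<lambda>g. x g \<oplus>\<^bsub>R\<^esub> y g) ?B)
        = basis_extension R V X val W x \<oplus>\<^bsub>obj V W\<^esub> basis_extension R V X val W y" .
  next
    fix c x assume c: "c \<in> carrier R" and x: "x \<in> ?B \<rightarrow>\<^sub>E carrier R"
    have cx: "restrict (\<lambda>g. c \<otimes>\<^bsub>R\<^esub> x g) ?B \<in> ?B \<rightarrow>\<^sub>E carrier R" using x c by auto
    have "basis_extension R V X val W (restrict (\<lambda>g. c \<otimes>\<^bsub>R\<^esub> x g) ?B)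
        = (\<Oplus>\<^bsub>obj V W\<^esub> g\<in>?B. c \<odot>\<^bsub>obj V W\<^esub> (x g \<odot>\<^bsub>obj V W\<^esub> val W g))"
      unfolding expand[OF cx]
      by (rule M.finsum_cong') (use x c val_closed in \<open>auto simp: M.smult_assoc1 PiE_iff\<close>)
    also have "\<dots> = c \<odot>\<^bsub>obj V W\<^esub> basis_extension R V X val W x"
      unfolding expand[OF x]
      by (rule M.finsum_smult_ldistr[symmetric]) (use x c val_closed fB in \<open>auto simp: PiE_iff\<close>)
    finally show "basis_extension R V X val W (restrict (\<lambda>g. c \<otimes>\<^bsub>R\<^esub> x g) ?B)
        = c \<odot>\<^bsub>obj V W\<^esub> basis_extension R V X val W x" .
  qed
qed

lemma basis_extension_natural:
  assumes fX: "finite X" and fW: "finite W" and fW': "finite W'" and h: "h \<in> FI_hom W W'"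
    and m: "m \<in> carrier (obj (shift (Mrep R X)) W)"
    and val_closed: "\<And>W g. finite W \<Longrightarrow> g \<in> FI_hom X (sigma_obj W) \<Longrightarrow> val W g \<in> carrier (obj V W)"
    and val_natural: "\<And>g. g \<in> FI_hom X (sigma_obj W) \<Longrightarrow>
           val W' (compose X (sigma_mor W h) g) = mor V W W' h (val W g)"
  shows "basis_extension R V X val W' (mor (shift (Mrep R X)) W W' h m)
       = mor V W W' h (basis_extension R V X val W m)"
proof -
  interpret M: module R "obj V W" using module_obj[OF fW] .
  interpret M': module R "obj V W'" using module_obj[OF fW'] .
  let ?B = "FI_hom X (sigma_obj W)" and ?B' = "FI_hom X (sigma_obj W')"
  let ?k = "compose X (sigma_mor W h)"
  have fB: "finite ?B" "finite ?B'" by (simp_all add: finite_FI_hom fX finite_sigma_obj fW fW')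
  have m': "m \<in> ?B \<rightarrow>\<^sub>E carrier R" using m by (simp add: obj_shift_Mrep free_mod_simps)
  have k: "?k \<in> ?B \<rightarrow> ?B'" by (rule compose_sigma_mor_Pi[OF h])
  have ext_closed: "lin_ext R ?B ?B' ?k m \<in> ?B' \<rightarrow>\<^sub>E carrier R"
    using m' by (auto simp: lin_ext_def intro!: finsum_closed)
  have "basis_extension R V X val W' (mor (shift (Mrep R X)) W W' h m)
      = (\<Oplus>\<^bsub>obj V W'\<^esub> g\<in>?B'. lin_ext R ?B ?B' ?k m g \<odot>\<^bsub>obj V W'\<^esub> val W' g)"
    unfolding mor_shift_Mrep basis_extension_apply[OF fW' ext_closed] ..
  also have "\<dots> = (\<Oplus>\<^bsub>obj V W'\<^esub> g\<in>?B. m g \<odot>\<^bsub>obj V W'\<^esub> val W' (?k g))"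
    by (rule M'.finsum_lin_ext_smult) (use fB k m' val_closed[OF fW'] in \<open>auto simp: PiE_iff\<close>)
  also have "\<dots> = (\<Oplus>\<^bsub>obj V W'\<^esub> g\<in>?B. mor V W W' h (m g \<odot>\<^bsub>obj V W\<^esub> val W g))"
    using m' val_closed[OF fW] val_natural lin_map_smult[OF lin_map_mor[OF fW fW' h]]
    by (intro M'.finsum_cong') (auto simp: PiE_iff intro!: mor_closed[OF fW fW' h])
  also have "\<dots> = mor V W W' h (basis_extension R V X val W m)"
    unfolding basis_extension_apply[OF fW m']
    by (rule lin_map_finsum[symmetric, OF module_obj[OF fW] module_obj[OF fW'] lin_map_mor[OF fW fW' h] fB(1)])
       (use m' val_closed[OF fW] in \<open>auto simp: PiE_iff\<close>)
  finally show ?thesis .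
qed

lemma basis_extension_in_Hom:
  assumes fX: "finite X"
    and val_closed: "\<And>W g. finite W \<Longrightarrow> g \<in> FI_hom X (sigma_obj W) \<Longrightarrow> val W g \<in> carrier (obj V W)"
    and val_natural: "\<And>W W' h g. finite W \<Longrightarrow> finite W' \<Longrightarrow> h \<in> FI_hom W W' \<Longrightarrow>
           g \<in> FI_hom X (sigma_obj W) \<Longrightarrow> val W' (compose X (sigma_mor W h) g) = mor V W W' h (val W g)"
  shows "basis_extension R V X val \<in> Hom_carrier R (shift (Mrep R X)) V"
proof -
  have "lin_map R (obj (shift (Mrep R X)) W) (obj V W) (basis_extension R V X val W)"
    if "finite W" for W
    using that val_closed by (intro basis_extension_lin[OF fX]) auto
  moreover have "basis_extension R V X val W' (mor (shift (Mrep R X)) W W' h m)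
      = mor V W W' h (basis_extension R V X val W m)"
    if "finite W" "finite W'" "h \<in> FI_hom W W'" "m \<in> carrier (obj (shift (Mrep R X)) W)" for W W' h m
    using that val_closed val_natural by (intro basis_extension_natural[OF fX]) auto
  ultimately show ?thesis
    unfolding Hom_carrier_def FI_morphism_def
    by (auto simp: basis_extension_def obj_shift_Mrep free_mod_simps)
qed

lemma basis_extension_basis_vec:
  assumes "finite X" "finite W" "c \<in> FI_hom X (sigma_obj W)"
    and "\<And>g. g \<in> FI_hom X (sigma_obj W) \<Longrightarrow> val W g \<in> carrier (obj V W)"
  shows "basis_extension R V X val W (basis_vec R (FI_hom X (sigma_obj W)) c) = val W c"
  unfolding basis_extension_apply[OF assms(2) basis_vec_in_free]
  by (rule module.finsum_basis_vec_smult[OF module_obj])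
     (use assms finite_FI_hom finite_sigma_obj in auto)

lemma basis_extension_cong:
  assumes "\<And>W g. finite W \<Longrightarrow> g \<in> FI_hom X (sigma_obj W) \<Longrightarrow> val' W g \<in> carrier (obj V W)"
    and "\<And>W g. finite W \<Longrightarrow> g \<in> FI_hom X (sigma_obj W) \<Longrightarrow> val W g = val' W g"
  shows "basis_extension R V X val = basis_extension R V X val'"
proof (rule ext)
  fix W
  show "basis_extension R V X val W = basis_extension R V X val' W"
  proof (cases "finite W")
    case True
    interpret M: module R "obj V W" using module_obj[OF True] .
    show ?thesis unfolding basis_extension_def using True
      by (auto intro!: restrict_ext M.finsum_cong' simp: assms PiE_iff)
  qed (simp add: basis_extension_def)
qed

lemma add_basis_extension:
  assumes val1: "\<And>W g. finite W \<Longrightarrow> g \<in> FI_hom X (sigma_obj W) \<Longrightarrow> val1 W g \<in> carrier (obj V W)"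
    and val2: "\<And>W g. finite W \<Longrightarrow> g \<in> FI_hom X (sigma_obj W) \<Longrightarrow> val2 W g \<in> carrier (obj V W)"
  shows "add (Hom_mod R (shift (Mrep R X)) V) (basis_extension R V X val1) (basis_extension R V X val2)
       = basis_extension R V X (\<lambda>W g. val1 W g \<oplus>\<^bsub>obj V W\<^esub> val2 W g)"
proof (rule ext)
  fix W
  show "add (Hom_mod R (shift (Mrep R X)) V) (basis_extension R V X val1) (basis_extension R V X val2) W
       = basis_extension R V X (\<lambda>W g. val1 W g \<oplus>\<^bsub>obj V W\<^esub> val2 W g) W"
  proof (cases "finite W")
    case True
    interpret M: module R "obj V W" using module_obj[OF True] .
    have "basis_extension R V X val1 W m \<oplus>\<^bsub>obj V W\<^esub> basis_extension R V X val2 W m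
        = (\<Oplus>\<^bsub>obj V W\<^esub> g\<in>FI_hom X (sigma_obj W). m g \<odot>\<^bsub>obj V W\<^esub> (val1 W g \<oplus>\<^bsub>obj V W\<^esub> val2 W g))"
      if m: "m \<in> FI_hom X (sigma_obj W) \<rightarrow>\<^sub>E carrier R" for m
    proof -
      have "basis_extension R V X val1 W m \<oplus>\<^bsub>obj V W\<^esub> basis_extension R V X val2 W m
          = (\<Oplus>\<^bsub>obj V W\<^esub> g\<in>FI_hom X (sigma_obj W).
               m g \<odot>\<^bsub>obj V W\<^esub> val1 W g \<oplus>\<^bsub>obj V W\<^esub> m g \<odot>\<^bsub>obj V W\<^esub> val2 W g)"
        unfolding basis_extension_apply[OF True m]
        by (rule M.finsum_addf[symmetric]) (use m val1[OF True] val2[OF True] in \<open>auto simp: PiE_iff\<close>)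
      also have "\<dots> = (\<Oplus>\<^bsub>obj V W\<^esub> g\<in>FI_hom X (sigma_obj W). m g \<odot>\<^bsub>obj V W\<^esub> (val1 W g \<oplus>\<^bsub>obj V W\<^esub> val2 W g))"
        using m val1[OF True] val2[OF True]
        by (intro M.finsum_cong') (auto simp: PiE_iff M.smult_r_distr)
      finally show ?thesis .
    qed
    then show ?thesis using True
      by (auto intro!: restrict_ext simp: Hom_mod_simps obj_shift_Mrep free_mod_simps basis_extension_def)
  qed (simp add: Hom_mod_simps basis_extension_def)
qed

lemma smult_basis_extension:
  assumes fX: "finite X" and c: "c \<in> carrier R"
    and val: "\<And>W g. finite W \<Longrightarrow> g \<in> FI_hom X (sigma_obj W) \<Longrightarrow> val W g \<in> carrier (obj V W)"
  shows "smult (Hom_mod R (shift (Mrep R X)) V) c (basis_extension R V X val)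
       = basis_extension R V X (\<lambda>W g. c \<odot>\<^bsub>obj V W\<^esub> val W g)"
proof (rule ext)
  fix W
  show "smult (Hom_mod R (shift (Mrep R X)) V) c (basis_extension R V X val) W
       = basis_extension R V X (\<lambda>W g. c \<odot>\<^bsub>obj V W\<^esub> val W g) W"
  proof (cases "finite W")
    case True
    interpret M: module R "obj V W" using module_obj[OF True] .
    have fB: "finite (FI_hom X (sigma_obj W))" by (simp add: finite_FI_hom fX finite_sigma_obj True)
    have "c \<odot>\<^bsub>obj V W\<^esub> basis_extension R V X val W m
        = (\<Oplus>\<^bsub>obj V W\<^esub> g\<in>FI_hom X (sigma_obj W). m g \<odot>\<^bsub>obj V W\<^esub> (c \<odot>\<^bsub>obj V W\<^esub> val W g))"
      if m: "m \<in> FI_hom X (sigma_obj W) \<rightarrow>\<^sub>E carrier R" for m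
    proof -
      have "c \<odot>\<^bsub>obj V W\<^esub> basis_extension R V X val W m
          = (\<Oplus>\<^bsub>obj V W\<^esub> g\<in>FI_hom X (sigma_obj W). c \<odot>\<^bsub>obj V W\<^esub> (m g \<odot>\<^bsub>obj V W\<^esub> val W g))"
        unfolding basis_extension_apply[OF True m]
        by (rule M.finsum_smult_ldistr) (use m val[OF True] c fB in \<open>auto simp: PiE_iff\<close>)
      also have "\<dots> = (\<Oplus>\<^bsub>obj V W\<^esub> g\<in>FI_hom X (sigma_obj W). m g \<odot>\<^bsub>obj V W\<^esub> (c \<odot>\<^bsub>obj V W\<^esub> val W g))"
        using m val[OF True] c
        by (intro M.finsum_cong') (auto simp: PiE_iff M.smult_assoc1[symmetric] m_comm)
      finally show ?thesis .
    qed
    then show ?thesis using True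
      by (auto intro!: restrict_ext simp: Hom_mod_simps obj_shift_Mrep free_mod_simps basis_extension_def)
  qed (simp add: Hom_mod_simps basis_extension_def)
qed

lemma coind_mor_basis_extension:
  assumes fX: "finite X" and fY: "finite Y" and f: "f \<in> FI_hom X Y"
    and val: "\<And>W g. finite W \<Longrightarrow> g \<in> FI_hom X (sigma_obj W) \<Longrightarrow> val W g \<in> carrier (obj V W)"
  shows "mor (coind R V) X Y f (basis_extension R V X val)
       = basis_extension R V Y (\<lambda>W k. val W (compose X k f))"
proof (rule ext)
  fix W
  show "mor (coind R V) X Y f (basis_extension R V X val) W
      = basis_extension R V Y (\<lambda>W k. val W (compose X k f)) W"
  proof (cases "finite W")
    case True
    interpret M: module R "obj V W" using module_obj[OF True] .
    let ?B = "FI_hom X (sigma_obj W)" and ?C = "FI_hom Y (sigma_obj W)"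
    have fin: "finite ?B" "finite ?C" by (simp_all add: finite_FI_hom fX fY finite_sigma_obj True)
    have k: "(\<lambda>g. compose X g f) \<in> ?C \<rightarrow> ?B" using FI_hom_compose[OF f] by blast
    have "basis_extension R V X val W (rho R X Y f (sigma_obj W) m)
        = (\<Oplus>\<^bsub>obj V W\<^esub> g\<in>?C. m g \<odot>\<^bsub>obj V W\<^esub> val W (compose X g f))"
      if m: "m \<in> ?C \<rightarrow>\<^sub>E carrier R" for m
    proof -
      have pulled: "rho R X Y f (sigma_obj W) m \<in> ?B \<rightarrow>\<^sub>E carrier R"
        using m by (auto simp: rho_def lin_ext_def PiE_iff intro!: finsum_closed)
      show ?thesis
        unfolding rho_def basis_extension_apply[OF True pulled[unfolded rho_def]]
        by (rule M.finsum_lin_ext_smult) (use fin k m val[OF True] in \<open>auto simp: PiE_iff\<close>)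
    qed
    then show ?thesis using True
      by (auto intro!: restrict_ext simp: coind_def basis_extension_def obj_shift_Mrep free_mod_simps)
  qed (simp add: coind_def basis_extension_def)
qed

lemma basis_extension_of_Hom:
  assumes fX: "finite X" and \<phi>: "\<phi> \<in> Hom_carrier R (shift (Mrep R X)) V"
  shows "\<phi> = basis_extension R V X (\<lambda>W g. \<phi> W (basis_vec R (FI_hom X (sigma_obj W)) g))"
proof (rule ext)
  fix W
  show "\<phi> W = basis_extension R V X (\<lambda>W g. \<phi> W (basis_vec R (FI_hom X (sigma_obj W)) g)) W"
  proof (cases "finite W")
    case True
    show ?thesis
    proof (rule extensionalityI[OF Hom_carrierD(4)[OF \<phi> True]])
      fix m assume m: "m \<in> FI_hom X (sigma_obj W) \<rightarrow>\<^sub>E carrier R"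
      show "\<phi> W m = basis_extension R V X (\<lambda>W g. \<phi> W (basis_vec R (FI_hom X (sigma_obj W)) g)) W m"
        unfolding basis_extension_apply[OF True m]
        by (rule lin_map_free_mod_eq_finsum[OF _ module_obj[OF True] Hom_carrierD(1)[OF \<phi> True] m])
           (simp add: finite_FI_hom fX finite_sigma_obj True)
    qed (use True in \<open>simp add: basis_extension_def\<close>)
  qed (simp add: basis_extension_def Hom_carrierD(3)[OF \<phi>])
qed

end

section \<open>Coordinates on the coinduction\<close>

text \<open>\<open>coind_elem R V X v a\<close> is the element of \<open>(QV)\<^sub>X\<close> with coordinates \<open>v \<in> V\<^sub>X\<close> and
  \<open>a \<in> (S\<^sub>-\<^sub>1 V)\<^sub>X\<close>; \<open>coind_value\<close> gives its value on the basis injection \<open>g\<close>, read off from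
  the factorization of \<open>g\<close> through \<open>\<iota>\<close> or \<open>j\<^sub>x\<close>. Conversely, \<open>coind_proj\<close> and \<open>coind_coords\<close>
  recover the coordinates of any element.\<close>

definition coind_value :: "('k, 'v) FImod \<Rightarrow> nat set \<Rightarrow> 'v \<Rightarrow> (nat \<Rightarrow> 'v) \<Rightarrow> nat set
    \<Rightarrow> (nat \<Rightarrow> nat) \<Rightarrow> 'v" where
  "coind_value V X v a W g =
     (if 0 \<notin> g ` X then mor V X W (unshift g X) v
      else let x = THE x. x \<in> X \<and> g x = 0 in mor V (X - {x}) W (unshift g (X - {x})) (a x))"

definition coind_elem :: "('k, 'r) ring_scheme \<Rightarrow> ('k, 'v) FImod \<Rightarrow> nat set \<Rightarrow> 'v \<Rightarrow> (nat \<Rightarrow> 'v)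
    \<Rightarrow> nat set \<Rightarrow> ((nat \<Rightarrow> nat) \<Rightarrow> 'k) \<Rightarrow> 'v" where
  "coind_elem R V X v a = basis_extension R V X (coind_value V X v a)"

definition coind_proj :: "('k, 'r) ring_scheme \<Rightarrow> nat set
    \<Rightarrow> (nat set \<Rightarrow> ((nat \<Rightarrow> nat) \<Rightarrow> 'k) \<Rightarrow> 'v) \<Rightarrow> 'v" where
  "coind_proj R X \<phi> = \<phi> X (basis_vec R (FI_hom X (sigma_obj X)) (shift_incl X))"

definition coind_coords :: "('k, 'r) ring_scheme \<Rightarrow> nat set
    \<Rightarrow> (nat set \<Rightarrow> ((nat \<Rightarrow> nat) \<Rightarrow> 'k) \<Rightarrow> 'v) \<Rightarrow> nat \<Rightarrow> 'v" where
  "coind_coords R X \<phi> =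
     restrict (\<lambda>x. \<phi> (X - {x}) (basis_vec R (FI_hom X (sigma_obj (X - {x}))) (shift_at X x))) X"

lemma coind_value_avoiding: "0 \<notin> g ` X \<Longrightarrow> coind_value V X v a W g = mor V X W (unshift g X) v"
  by (simp add: coind_value_def)

lemma coind_value_hitting:
  assumes "g \<in> FI_hom X Y" "x \<in> X" "g x = 0"
  shows "coind_value V X v a W g = mor V (X - {x}) W (unshift g (X - {x})) (a x)"
proof -
  have "(THE x. x \<in> X \<and> g x = 0) = x"
    using assms by (intro the_equality) (auto simp: FI_hom_def inj_on_def)
  moreover have "0 \<in> g ` X" using assms by force
  ultimately show ?thesis by (simp add: coind_value_def Let_def)
qed

lemma coind_value_cases:
  assumes "g \<in> FI_hom X (sigma_obj W)"
  obtains (avoiding) "0 \<notin> g ` X" "unshift g X \<in> FI_hom X W"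
      "coind_value V X v a W g = mor V X W (unshift g X) v"
    | (hitting) x where "x \<in> X" "g x = 0" "unshift g (X - {x}) \<in> FI_hom (X - {x}) W"
      "coind_value V X v a W g = mor V (X - {x}) W (unshift g (X - {x})) (a x)"
proof (cases "0 \<in> g ` X")
  case True
  then obtain x where x: "x \<in> X" "g x = 0" by auto
  show ?thesis
    by (rule hitting[OF x unshift_FI_hom_hitting[OF assms x] coind_value_hitting[OF assms x]])
next
  case False
  show ?thesis
    by (rule avoiding[OF False unshift_FI_hom_avoiding[OF assms False] coind_value_avoiding[OF False]])
qed

context cring_FI_module
begin

lemma coind_value_closed:
  assumes "finite X" "finite W" "v \<in> carrier (obj V X)" "a \<in> carrier (obj (negshift V) X)"
    and g: "g \<in> FI_hom X (sigma_obj W)"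
  shows "coind_value V X v a W g \<in> carrier (obj V W)"
  using g by (cases rule: coind_value_cases[where V = V and v = v and a = a])
    (use assms in \<open>auto intro!: mor_closed simp: negshift_simps\<close>)

lemma coind_value_natural:
  assumes fX: "finite X" and fW: "finite W" and fW': "finite W'"
    and v: "v \<in> carrier (obj V X)" and a: "a \<in> carrier (obj (negshift V) X)"
    and h: "h \<in> FI_hom W W'" and g: "g \<in> FI_hom X (sigma_obj W)"
  shows "coind_value V X v a W' (compose X (sigma_mor W h) g) = mor V W W' h (coind_value V X v a W g)"
proof -
  let ?g' = "compose X (sigma_mor W h) g"
  have g': "?g' \<in> FI_hom X (sigma_obj W')" using FI_hom_compose[OF g sigma_mor_FI_hom[OF h]] .
  show ?thesis
    using g
  proof (cases rule: coind_value_cases[where V = V and v = v and a = a])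
    case avoiding
    have "0 \<notin> ?g' ` X"
      using avoiding(1) compose_sigma_mor_nonzero[OF g] by (auto simp: image_iff)
    moreover have "unshift ?g' X = compose X h (unshift g X)"
      using avoiding(1) by (intro unshift_compose_sigma_mor[OF g]) auto
    ultimately show ?thesis
      using avoiding mor_compose[OF fX fW fW' avoiding(2) h v] by (simp add: coind_value_avoiding)
  next
    case (hitting x)
    have "?g' x = 0" using hitting by (simp add: compose_def)
    moreover have "unshift ?g' (X - {x}) = compose (X - {x}) h (unshift g (X - {x}))"
      using hitting inj_onD[OF FI_homD(2)[OF g]] by (intro unshift_compose_sigma_mor[OF g]) auto
    moreover have "a x \<in> carrier (obj V (X - {x}))" using a hitting by (auto simp: negshift_simps)
    ultimately show ?thesis
      using hitting fX mor_compose[OF _ fW fW' hitting(3) h] by (simp add: coind_value_hitting[OF g'])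
  qed
qed

lemma coind_value_shift_incl:
  assumes "finite X" "v \<in> carrier (obj V X)"
  shows "coind_value V X v a X (shift_incl X) = v"
proof -
  have "0 \<notin> shift_incl X ` X" by (auto simp: shift_incl_def)
  then show ?thesis using assms by (simp add: coind_value_avoiding unshift_shift_incl mor_id)
qed

lemma coind_value_shift_at:
  assumes "finite X" "x \<in> X" "a x \<in> carrier (obj V (X - {x}))"
  shows "coind_value V X v a (X - {x}) (shift_at X x) = a x"
proof -
  have "shift_at X x x = 0" using assms(2) by (simp add: shift_at_def)
  then show ?thesis
    using assms by (simp add: coind_value_hitting[OF shift_at_FI_hom] unshift_shift_at mor_id)
qed

lemma coind_value_add:
  assumes "finite X" "finite W" "g \<in> FI_hom X (sigma_obj W)"
    and "v \<in> carrier (obj V X)" "v' \<in> carrier (obj V X)"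
    and "a \<in> carrier (obj (negshift V) X)" "a' \<in> carrier (obj (negshift V) X)"
  shows "coind_value V X (v \<oplus>\<^bsub>obj V X\<^esub> v') (add (obj (negshift V) X) a a') W g
       = coind_value V X v a W g \<oplus>\<^bsub>obj V W\<^esub> coind_value V X v' a' W g"
  using assms(3)
  by (cases rule: coind_value_cases[where V = V and v = v and a = a])
     (use assms in \<open>auto simp: coind_value_avoiding coind_value_hitting negshift_simps
        intro!: lin_map_add[OF lin_map_mor]\<close>)

lemma coind_value_smult:
  assumes "finite X" "finite W" "g \<in> FI_hom X (sigma_obj W)" "c \<in> carrier R"
    and "v \<in> carrier (obj V X)" "a \<in> carrier (obj (negshift V) X)"
  shows "coind_value V X (c \<odot>\<^bsub>obj V X\<^esub> v) (smult (obj (negshift V) X) c a) W g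
       = c \<odot>\<^bsub>obj V W\<^esub> coind_value V X v a W g"
  using assms(3)
  by (cases rule: coind_value_cases[where V = V and v = v and a = a])
     (use assms in \<open>auto simp: coind_value_avoiding coind_value_hitting negshift_simps
        intro!: lin_map_smult[OF lin_map_mor]\<close>)

lemma coind_elem_in_Hom:
  assumes "finite X" "v \<in> carrier (obj V X)" "a \<in> carrier (obj (negshift V) X)"
  shows "coind_elem R V X v a \<in> Hom_carrier R (shift (Mrep R X)) V"
  unfolding coind_elem_def
  using assms coind_value_closed coind_value_natural by (intro basis_extension_in_Hom) auto

lemma add_coind_elem:
  assumes fX: "finite X" and "v \<in> carrier (obj V X)" "v' \<in> carrier (obj V X)"
    and "a \<in> carrier (obj (negshift V) X)" "a' \<in> carrier (obj (negshift V) X)"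
  shows "add (Hom_mod R (shift (Mrep R X)) V) (coind_elem R V X v a) (coind_elem R V X v' a')
       = coind_elem R V X (v \<oplus>\<^bsub>obj V X\<^esub> v') (add (obj (negshift V) X) a a')"
proof -
  have "add (Hom_mod R (shift (Mrep R X)) V) (coind_elem R V X v a) (coind_elem R V X v' a')
      = basis_extension R V X (\<lambda>W g. coind_value V X v a W g \<oplus>\<^bsub>obj V W\<^esub> coind_value V X v' a' W g)"
    unfolding coind_elem_def using assms by (intro add_basis_extension coind_value_closed) auto
  also have "\<dots> = coind_elem R V X (v \<oplus>\<^bsub>obj V X\<^esub> v') (add (obj (negshift V) X) a a')"
    unfolding coind_elem_def using assms
    by (intro basis_extension_cong coind_value_add[symmetric] coind_value_closed
        obj_add_closed negshift_add_closed) auto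
  finally show ?thesis .
qed

lemma smult_coind_elem:
  assumes fX: "finite X" and c: "c \<in> carrier R"
    and "v \<in> carrier (obj V X)" "a \<in> carrier (obj (negshift V) X)"
  shows "smult (Hom_mod R (shift (Mrep R X)) V) c (coind_elem R V X v a)
       = coind_elem R V X (c \<odot>\<^bsub>obj V X\<^esub> v) (smult (obj (negshift V) X) c a)"
proof -
  have "smult (Hom_mod R (shift (Mrep R X)) V) c (coind_elem R V X v a)
      = basis_extension R V X (\<lambda>W g. c \<odot>\<^bsub>obj V W\<^esub> coind_value V X v a W g)"
    unfolding coind_elem_def using assms by (intro smult_basis_extension coind_value_closed) auto
  also have "\<dots> = coind_elem R V X (c \<odot>\<^bsub>obj V X\<^esub> v) (smult (obj (negshift V) X) c a)"
    unfolding coind_elem_def using assms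
    by (intro basis_extension_cong coind_value_smult[symmetric] coind_value_closed
        obj_smult_closed negshift_smult_closed) auto
  finally show ?thesis .
qed

lemma coind_elem_basis_vec:
  assumes "finite X" "finite W" "v \<in> carrier (obj V X)" "a \<in> carrier (obj (negshift V) X)"
    and "g \<in> FI_hom X (sigma_obj W)"
  shows "coind_elem R V X v a W (basis_vec R (FI_hom X (sigma_obj W)) g) = coind_value V X v a W g"
  unfolding coind_elem_def using assms coind_value_closed by (intro basis_extension_basis_vec) auto

lemma coind_proj_coind_elem:
  assumes "finite X" "v \<in> carrier (obj V X)" "a \<in> carrier (obj (negshift V) X)"
  shows "coind_proj R X (coind_elem R V X v a) = v"
  using assms by (simp add: coind_proj_def coind_elem_basis_vec shift_incl_FI_hom coind_value_shift_incl)

lemma coind_coords_coind_elem: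
  assumes "finite X" "v \<in> carrier (obj V X)" "a \<in> carrier (obj (negshift V) X)"
  shows "coind_coords R X (coind_elem R V X v a) = a"
proof (rule extensionalityI)
  show "coind_coords R X (coind_elem R V X v a) \<in> extensional X" by (simp add: coind_coords_def)
  show "a \<in> extensional X" using assms(3) by (simp add: negshift_simps PiE_iff)
  fix x assume "x \<in> X"
  then show "coind_coords R X (coind_elem R V X v a) x = a x"
    using assms by (auto simp: coind_coords_def coind_elem_basis_vec shift_at_FI_hom
      negshift_simps intro!: coind_value_shift_at)
qed

lemma Hom_carrier_basis_vec_natural:
  assumes fX: "finite X" and fW: "finite W" and fW': "finite W'"
    and \<phi>: "\<phi> \<in> Hom_carrier R (shift (Mrep R X)) V"
    and h: "h \<in> FI_hom W W'" and g: "g \<in> FI_hom X (sigma_obj W)"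
  shows "\<phi> W' (basis_vec R (FI_hom X (sigma_obj W')) (compose X (sigma_mor W h) g))
       = mor V W W' h (\<phi> W (basis_vec R (FI_hom X (sigma_obj W)) g))"
proof -
  have "basis_vec R (FI_hom X (sigma_obj W')) (compose X (sigma_mor W h) g)
      = lin_ext R (FI_hom X (sigma_obj W)) (FI_hom X (sigma_obj W')) (compose X (sigma_mor W h))
          (basis_vec R (FI_hom X (sigma_obj W)) g)"
    by (rule lin_ext_basis_vec[symmetric])
       (use fX fW g compose_sigma_mor_Pi[OF h] in \<open>auto simp: finite_FI_hom finite_sigma_obj\<close>)
  then show ?thesis using Hom_carrierD(2)[OF \<phi> fW fW' h basis_vec_in_free] by simp
qed

lemma coind_proj_closed:
  "finite X \<Longrightarrow> \<phi> \<in> Hom_carrier R (shift (Mrep R X)) V \<Longrightarrow> coind_proj R X \<phi> \<in> carrier (obj V X)"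
  unfolding coind_proj_def by (rule Hom_carrier_closed[OF _ _ basis_vec_in_free])

lemma coind_coords_closed:
  "finite X \<Longrightarrow> \<phi> \<in> Hom_carrier R (shift (Mrep R X)) V \<Longrightarrow>
   coind_coords R X \<phi> \<in> carrier (obj (negshift V) X)"
  unfolding coind_coords_def negshift_simps
  using Hom_carrier_closed[OF _ _ basis_vec_in_free] by simp

lemma Hom_carrier_basis_vec:
  assumes fX: "finite X" and fW: "finite W" and \<phi>: "\<phi> \<in> Hom_carrier R (shift (Mrep R X)) V"
    and g: "g \<in> FI_hom X (sigma_obj W)"
  shows "\<phi> W (basis_vec R (FI_hom X (sigma_obj W)) g)
       = coind_value V X (coind_proj R X \<phi>) (coind_coords R X \<phi>) W g"
  using g
proof (cases rule: coind_value_cases[where V = V and v = "coind_proj R X \<phi>" and a = "coind_coords R X \<phi>"])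
  case avoiding
  then show ?thesis
    using Hom_carrier_basis_vec_natural[OF fX fX fW \<phi> avoiding(2) shift_incl_FI_hom]
    by (simp add: shift_incl_factor[OF g] coind_proj_def)
next
  case (hitting x)
  then show ?thesis
    using Hom_carrier_basis_vec_natural[OF fX _ fW \<phi> hitting(3) shift_at_FI_hom[OF hitting(1)]] fX
    by (simp add: shift_at_factor[OF g] coind_coords_def)
qed

lemma coind_elem_proj_coords:
  assumes fX: "finite X" and \<phi>: "\<phi> \<in> Hom_carrier R (shift (Mrep R X)) V"
  shows "\<phi> = coind_elem R V X (coind_proj R X \<phi>) (coind_coords R X \<phi>)"
proof -
  have "\<phi> = basis_extension R V X (\<lambda>W g. \<phi> W (basis_vec R (FI_hom X (sigma_obj W)) g))"
    by (rule basis_extension_of_Hom[OF assms])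
  also have "\<dots> = coind_elem R V X (coind_proj R X \<phi>) (coind_coords R X \<phi>)"
    unfolding coind_elem_def
    using coind_value_closed[OF fX _ coind_proj_closed[OF assms] coind_coords_closed[OF assms]]
      Hom_carrier_basis_vec[OF fX _ \<phi>]
    by (rule basis_extension_cong)
  finally show ?thesis .
qed

lemma coind_value_pull_negshift:
  assumes fX: "finite X" and fY: "finite Y" and fW: "finite W" and f: "f \<in> FI_hom X Y"
    and a: "a \<in> carrier (obj (negshift V) X)" and k: "k \<in> FI_hom Y (sigma_obj W)"
  shows "coind_value V Y \<zero>\<^bsub>obj V Y\<^esub> (mor (negshift V) X Y f a) W k
       = coind_value V X \<zero>\<^bsub>obj V X\<^esub> a W (compose X k f)"
proof -
  let ?k = "compose X k f"
  have k': "?k \<in> FI_hom X (sigma_obj W)" by (rule FI_hom_compose[OF f k])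
  show ?thesis
    using k
  proof (cases rule: coind_value_cases[where V = V and v = "\<zero>\<^bsub>obj V Y\<^esub>" and a = "mor (negshift V) X Y f a"])
    case avoiding
    then have "0 \<notin> ?k ` X" using FI_homD(1)[OF f] by (auto simp: compose_def)
    then show ?thesis using avoiding fX fY fW
      by (simp add: coind_value_avoiding mor_zero unshift_FI_hom_avoiding[OF k'])
  next
    case (hitting y)
    note zero_iff = zero_in_compose_image_iff[OF k f hitting(1,2)]
    show ?thesis
    proof (cases "y \<in> f ` X")
      case True
      then obtain x where x: "x \<in> X" "f x = y" by blast
      have k'x: "?k x = 0" using x hitting by (simp add: compose_def)
      have ax: "a x \<in> carrier (obj V (X - {x}))" using a x by (auto simp: negshift_simps)
      have "coind_value V Y \<zero>\<^bsub>obj V Y\<^esub> (mor (negshift V) X Y f a) W k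
          = mor V (Y - {y}) W (unshift k (Y - {y}))
              (mor V (X - {x}) (Y - {y}) (restrict f (X - {x})) (a x))"
        using hitting(4) negshift_mor_image[OF f x(1), where V = V and a = a] x(2) by simp
      also have "\<dots> = mor V (X - {x}) W (unshift ?k (X - {x})) (a x)"
        using mor_compose[OF _ _ fW restrict_FI_hom_remove[OF f x(1)] _ ax] hitting(3) x(2) fX fY
        by (simp add: unshift_compose_remove[OF f x(1)])
      also have "\<dots> = coind_value V X \<zero>\<^bsub>obj V X\<^esub> a W ?k"
        by (rule coind_value_hitting[OF k' x(1) k'x, symmetric])
      finally show ?thesis .
    next
      case False
      then show ?thesis using hitting zero_iff fX fY fW
        by (simp add: coind_value_avoiding negshift_mor_outside_image mor_zero
            unshift_FI_hom_avoiding[OF k'])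
    qed
  qed
qed

lemma coind_value_pull_bij:
  assumes fX: "finite X" and fY: "finite Y" and fW: "finite W" and f: "f \<in> FB_hom X Y"
    and v: "v \<in> carrier (obj V X)" and k: "k \<in> FI_hom Y (sigma_obj W)"
  shows "coind_value V Y (mor V X Y f v) \<zero>\<^bsub>obj (negshift V) Y\<^esub> W k
       = coind_value V X v \<zero>\<^bsub>obj (negshift V) X\<^esub> W (compose X k f)"
proof -
  let ?k = "compose X k f"
  have f': "f \<in> FI_hom X Y" and onto: "f ` X = Y" using f by (auto simp: FB_hom_def)
  have k': "?k \<in> FI_hom X (sigma_obj W)" by (rule FI_hom_compose[OF f' k])
  show ?thesis
    using k
  proof (cases rule: coind_value_cases[where V = V and v = "mor V X Y f v" and a = "\<zero>\<^bsub>obj (negshift V) Y\<^esub>"])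
    case avoiding
    then have "0 \<notin> ?k ` X" using onto by (auto simp: compose_def)
    moreover have "unshift ?k X = compose X (unshift k Y) f"
      using onto by (intro unshift_compose) auto
    ultimately show ?thesis
      using avoiding mor_compose[OF fX fY fW f' _ v] by (simp add: coind_value_avoiding)
  next
    case (hitting y)
    then obtain x where x: "x \<in> X" "f x = y" using onto by blast
    then have "?k x = 0" using hitting by (simp add: compose_def)
    then show ?thesis
      using hitting x fX fY fW
      by (simp add: coind_value_hitting[OF k'] unshift_FI_hom_hitting[OF k'] negshift_simps mor_zero)
  qed
qed

end

section \<open>The split short exact sequence\<close>

definition negshift_to_coind :: "('k, 'r) ring_scheme \<Rightarrow> ('k, 'v) FImod \<Rightarrow> nat set \<Rightarrow> (nat \<Rightarrow> 'v)
    \<Rightarrow> nat set \<Rightarrow> ((nat \<Rightarrow> nat) \<Rightarrow> 'k) \<Rightarrow> 'v" where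
  "negshift_to_coind R V X a = coind_elem R V X \<zero>\<^bsub>obj V X\<^esub> a"

definition coind_section :: "('k, 'r) ring_scheme \<Rightarrow> ('k, 'v) FImod \<Rightarrow> nat set \<Rightarrow> 'v
    \<Rightarrow> nat set \<Rightarrow> ((nat \<Rightarrow> nat) \<Rightarrow> 'k) \<Rightarrow> 'v" where
  "coind_section R V X v = coind_elem R V X v \<zero>\<^bsub>obj (negshift V) X\<^esub>"

context cring_FI_module
begin

lemma coind_mor_coind_elem_negshift:
  assumes fX: "finite X" and fY: "finite Y" and f: "f \<in> FI_hom X Y"
    and a: "a \<in> carrier (obj (negshift V) X)"
  shows "mor (coind R V) X Y f (coind_elem R V X \<zero>\<^bsub>obj V X\<^esub> a)
       = coind_elem R V Y \<zero>\<^bsub>obj V Y\<^esub> (mor (negshift V) X Y f a)"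
  unfolding coind_elem_def
  using assms obj_zero_closed coind_value_closed[OF fX _ obj_zero_closed[OF fX] a]
    FI_hom_compose[OF f] coind_value_pull_negshift[OF fX fY _ f a]
  by (subst coind_mor_basis_extension) (auto intro!: basis_extension_cong)

lemma coind_mor_coind_elem_bij:
  assumes fX: "finite X" and fY: "finite Y" and f: "f \<in> FB_hom X Y"
    and v: "v \<in> carrier (obj V X)"
  shows "mor (coind R V) X Y f (coind_elem R V X v \<zero>\<^bsub>obj (negshift V) X\<^esub>)
       = coind_elem R V Y (mor V X Y f v) \<zero>\<^bsub>obj (negshift V) Y\<^esub>"
proof -
  have f': "f \<in> FI_hom X Y" using f by (simp add: FB_hom_def)
  show ?thesis
    unfolding coind_elem_def
    using assms coind_value_closed[OF fX _ v negshift_zero_closed[OF fX]]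
      FI_hom_compose[OF f'] coind_value_pull_bij[OF fX fY _ f v]
    by (subst coind_mor_basis_extension[OF fX fY f']) (auto intro!: basis_extension_cong)
qed

lemma coind_proj_lin:
  assumes fX: "finite X"
  shows "lin_map R (obj (coind R V) X) (obj V X) (coind_proj R X)"
proof -
  have b: "basis_vec R (FI_hom X (sigma_obj X)) (shift_incl X) \<in> carrier (obj (shift (Mrep R X)) X)"
    using basis_vec_in_free by (simp add: obj_shift_Mrep free_mod_simps)
  show ?thesis
    unfolding lin_map_def coind_obj Hom_mod_simps
    using coind_proj_closed[OF fX] fX b by (auto simp: coind_proj_def)
qed

lemma coind_proj_natural:
  assumes fX: "finite X" and fY: "finite Y" and f: "f \<in> FI_hom X Y"
    and \<phi>: "\<phi> \<in> Hom_carrier R (shift (Mrep R X)) V"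
  shows "coind_proj R Y (mor (coind R V) X Y f \<phi>) = mor V X Y f (coind_proj R X \<phi>)"
proof -
  have "coind_proj R Y (mor (coind R V) X Y f \<phi>)
      = \<phi> Y (rho R X Y f (sigma_obj Y) (basis_vec R (FI_hom Y (sigma_obj Y)) (shift_incl Y)))"
    using fY basis_vec_in_free[of "FI_hom Y (sigma_obj Y)" "shift_incl Y"]
    by (simp add: coind_proj_def coind_def obj_shift_Mrep free_mod_simps)
  also have "\<dots> = \<phi> Y (basis_vec R (FI_hom X (sigma_obj Y)) (compose X (sigma_mor X f) (shift_incl X)))"
    using fY f by (simp add: rho_basis_vec finite_sigma_obj shift_incl_FI_hom shift_incl_natural)
  also have "\<dots> = mor V X Y f (coind_proj R X \<phi>)"
    unfolding coind_proj_def by (rule Hom_carrier_basis_vec_natural[OF fX fX fY \<phi> f shift_incl_FI_hom])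
  finally show ?thesis .
qed

lemma negshift_to_coind_lin:
  assumes fX: "finite X"
  shows "lin_map R (obj (negshift V) X) (obj (coind R V) X) (negshift_to_coind R V X)"
  unfolding lin_map_def coind_obj Hom_mod_simps(1) negshift_to_coind_def
  using fX obj_zero_closed[OF fX]
  by (auto simp: coind_elem_in_Hom add_coind_elem smult_coind_elem obj_zero_add_zero obj_smult_zero)

lemma coind_section_lin:
  assumes fX: "finite X"
  shows "lin_map R (obj V X) (obj (coind R V) X) (coind_section R V X)"
  unfolding lin_map_def coind_obj Hom_mod_simps(1) coind_section_def
  using fX negshift_zero_closed[OF fX]
  by (auto simp: coind_elem_in_Hom add_coind_elem smult_coind_elem negshift_zero_add_zero
      negshift_smult_zero)

lemma negshift_to_coind_FI_morphism: "FI_morphism R (negshift V) (coind R V) (negshift_to_coind R V)"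
  unfolding FI_morphism_def
  using negshift_to_coind_lin coind_mor_coind_elem_negshift by (simp add: negshift_to_coind_def)

lemma coind_proj_FI_morphism: "FI_morphism R (coind R V) V (coind_proj R)"
  unfolding FI_morphism_def
  using coind_proj_lin coind_proj_natural by (simp add: coind_obj Hom_mod_simps)

lemma coind_section_FB_morphism: "FB_morphism R V (coind R V) (coind_section R V)"
  unfolding FB_morphism_def
  using coind_section_lin coind_mor_coind_elem_bij by (simp add: coind_section_def)

lemma coind_proj_section:
  "finite X \<Longrightarrow> v \<in> carrier (obj V X) \<Longrightarrow> coind_proj R X (coind_section R V X v) = v"
  by (simp add: coind_section_def coind_proj_coind_elem negshift_zero_closed)

lemma negshift_to_coind_inj:
  "finite X \<Longrightarrow> inj_on (negshift_to_coind R V X) (carrier (obj (negshift V) X))"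
  by (rule inj_on_inverseI[where g = "coind_coords R X"])
     (simp add: negshift_to_coind_def coind_coords_coind_elem obj_zero_closed)

lemma coind_proj_image:
  assumes fX: "finite X"
  shows "coind_proj R X ` carrier (obj (coind R V) X) = carrier (obj V X)"
proof
  show "coind_proj R X ` carrier (obj (coind R V) X) \<subseteq> carrier (obj V X)"
    using coind_proj_closed[OF fX] by (auto simp: coind_obj Hom_mod_simps)
  show "carrier (obj V X) \<subseteq> coind_proj R X ` carrier (obj (coind R V) X)"
    using coind_proj_section[OF fX, symmetric] lin_map_closed[OF coind_section_lin[OF fX]] by blast
qed

lemma negshift_to_coind_image:
  assumes fX: "finite X"
  shows "negshift_to_coind R V X ` carrier (obj (negshift V) X)
       = {\<phi> \<in> carrier (obj (coind R V) X). coind_proj R X \<phi> = \<zero>\<^bsub>obj V X\<^esub>}"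
proof
  show "negshift_to_coind R V X ` carrier (obj (negshift V) X)
      \<subseteq> {\<phi> \<in> carrier (obj (coind R V) X). coind_proj R X \<phi> = \<zero>\<^bsub>obj V X\<^esub>}"
    using lin_map_closed[OF negshift_to_coind_lin[OF fX]]
    by (auto simp: negshift_to_coind_def coind_proj_coind_elem fX obj_zero_closed)
next
  show "{\<phi> \<in> carrier (obj (coind R V) X). coind_proj R X \<phi> = \<zero>\<^bsub>obj V X\<^esub>}
      \<subseteq> negshift_to_coind R V X ` carrier (obj (negshift V) X)"
  proof clarify
    fix \<phi> assume "\<phi> \<in> carrier (obj (coind R V) X)" and proj: "coind_proj R X \<phi> = \<zero>\<^bsub>obj V X\<^esub>"
    then have \<phi>: "\<phi> \<in> Hom_carrier R (shift (Mrep R X)) V" by (simp add: coind_obj Hom_mod_simps)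
    have "\<phi> = coind_elem R V X (coind_proj R X \<phi>) (coind_coords R X \<phi>)"
      by (rule coind_elem_proj_coords[OF fX \<phi>])
    then have "\<phi> = negshift_to_coind R V X (coind_coords R X \<phi>)"
      by (simp add: proj negshift_to_coind_def)
    then show "\<phi> \<in> negshift_to_coind R V X ` carrier (obj (negshift V) X)"
      using coind_coords_closed[OF fX \<phi>] by blast
  qed
qed

lemma short_exact_negshift_coind:
  "short_exact R (negshift V) (coind R V) V (negshift_to_coind R V) (coind_proj R)"
  unfolding short_exact_def
  using negshift_to_coind_FI_morphism coind_proj_FI_morphism negshift_to_coind_inj
    coind_proj_image negshift_to_coind_image
  by simp

end

theorem mainTheorem4:
  fixes R :: "('k, 'r) ring_scheme" and V :: "('k, 'v) FImod"
  assumes "cring R" and "FI_module R V"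
  shows "\<exists>\<iota> \<pi>. short_exact R (negshift V) (coind R V) V \<iota> \<pi> \<and>
           (\<exists>s. FB_morphism R V (coind R V) s \<and>
                (\<forall>X. finite X \<longrightarrow> (\<forall>v\<in>carrier (obj V X). \<pi> X (s X v) = v)))"
proof -
  interpret cring_FI_module R V
    using assms by (intro cring_FI_module.intro cring_FI_module_axioms.intro)
  show ?thesis
    using short_exact_negshift_coind coind_section_FB_morphism coind_proj_section by blast
qed

end
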